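(* Let $\mathcal{G}=(\mathcal{V},\mathcal{E})$ be a DAG with treatment $A$ and outcome $Y$ and a linear Gaussian causal model on it as in the context. Let $K\subseteq\mathcal{V}\setminus\{A,Y\}$ be any set of variables (not necessarily a valid adjustment set) and let $P$ be a precision variable in $\mathcal{G}$. Then the bias of the OLS estimator is invariant to adding $P$: $B(\hat\tau_K)=B(\hat\tau_{K\cup P})$.
   Context: $\mathcal{G}=(\mathcal{V},\mathcal{E})$ is a DAG containing treatment $A$ and outcome $Y$ with an edge $A\to Y$; variables follow $V_i=\sum_{V_j\in\mathrm{Pa}(V_i,\mathcal{G})}\beta_{ij}V_j+\epsilon_i$ with jointly independent $\epsilon_i\sim\mathcal{N}(0,\sigma_i^2)$, Markov and faithful to $\mathcal{G}$; no variable of $\mathcal{V}\setminus\{A,Y\}$ is a descendant of $A$. $\tau=\frac{\partial}{\partial a}E\{Y\mid do(A=a)\}$. $\hat\tau_K$ is the OLS coefficient of $A$ when regressing $Y$ on $A$ and $K$, and $B(\hat\tau_K)=E(\hat\tau_K)-\tau$. $\mathcal{G}'$ is $\mathcal{G}$ with $A\to Y$ removed. A precision variable is $V\in\mathcal{V}\setminus\{A,Y\}$ that in $\mathcal{G}'$ is d-separated from $A$ given every $K\subseteq\mathcal{V}\setminus\{A,Y\}$ and d-connected to $Y$ given some $L\subseteq\mathcal{V}\setminus\{A,Y\}$. *)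

theory Defs
  imports "HOL-Analysis.Analysis"
begin

section \<open>Graph notions (DAG on a finite vertex type, edges as pairs (parent, child))\<close>

definition adj :: "('v \<times> 'v) set \<Rightarrow> 'v \<Rightarrow> 'v \<Rightarrow> bool" where
  "adj E u w \<longleftrightarrow> (u, w) \<in> E \<or> (w, u) \<in> E"

definition collider :: "('v \<times> 'v) set \<Rightarrow> 'v \<Rightarrow> 'v \<Rightarrow> 'v \<Rightarrow> bool" where
  "collider E a b c \<longleftrightarrow> (a, b) \<in> E \<and> (c, b) \<in> E"

definition d_connecting_path :: "('v \<times> 'v) set \<Rightarrow> 'v list \<Rightarrow> 'v \<Rightarrow> 'v \<Rightarrow> 'v set \<Rightarrow> bool" where
  "d_connecting_path E p x y Z \<longleftrightarrow>
     p \<noteq> [] \<and> hd p = x \<and> last p = y \<and> distinct p \<and>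
     (\<forall>i. Suc i < length p \<longrightarrow> adj E (p ! i) (p ! Suc i)) \<and>
     (\<forall>i. 0 < i \<and> Suc i < length p \<longrightarrow>
        (if collider E (p ! (i - 1)) (p ! i) (p ! Suc i)
         then (\<exists>d. (p ! i, d) \<in> E\<^sup>* \<and> d \<in> Z)
         else p ! i \<notin> Z))"

definition d_connected :: "('v \<times> 'v) set \<Rightarrow> 'v \<Rightarrow> 'v \<Rightarrow> 'v set \<Rightarrow> bool" where
  "d_connected E x y Z \<longleftrightarrow> (\<exists>p. d_connecting_path E p x y Z)"

definition d_separated :: "('v \<times> 'v) set \<Rightarrow> 'v \<Rightarrow> 'v \<Rightarrow> 'v set \<Rightarrow> bool" where
  "d_separated E x y Z \<longleftrightarrow> \<not> d_connected E x y Z"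

text \<open>beta i j is the coefficient of V_j in the structural equation of V_i;
  sd i is the standard deviation of the noise epsilon_i.
  X = B X + eps, hence Cov(X) = (I - B)^{-1} D (I - B)^{-T}.\<close>
definition coef_matrix :: "('v::finite \<Rightarrow> 'v \<Rightarrow> real) \<Rightarrow> real^'v^'v" where
  "coef_matrix beta = (\<chi> i j. beta i j)"

definition sem_cov :: "('v::finite \<Rightarrow> 'v \<Rightarrow> real) \<Rightarrow> ('v \<Rightarrow> real) \<Rightarrow> real^'v^'v" where
  "sem_cov beta sd =
     (let M = matrix_inv (mat 1 - coef_matrix beta);
          D = (\<chi> i j. if i = j then (sd i)\<^sup>2 else 0)
      in M ** D ** transpose M)"

text \<open>Population least-squares coefficients of the regression of y on the variables in W
  (the unique solution supported on W of the normal equations).\<close>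
definition lin_proj :: "real^'v^'v \<Rightarrow> 'v::finite \<Rightarrow> 'v set \<Rightarrow> ('v \<Rightarrow> real)" where
  "lin_proj S y W = (THE b. (\<forall>u. u \<notin> W \<longrightarrow> b u = 0) \<and>
       (\<forall>w\<in>W. S $ w $ y = (\<Sum>u\<in>W. b u * S $ w $ u)))"

definition ols_coef :: "real^'v^'v \<Rightarrow> 'v::finite \<Rightarrow> 'v \<Rightarrow> 'v set \<Rightarrow> real" where
  "ols_coef S A Y K = lin_proj S Y (insert A K) A"

text \<open>Partial covariance of i and j given S (Gaussian: zero iff conditional independence).\<close>
definition pcov :: "real^'v^'v \<Rightarrow> 'v::finite \<Rightarrow> 'v \<Rightarrow> 'v set \<Rightarrow> real" where
  "pcov S i j Z = S $ i $ j - (\<Sum>u\<in>Z. lin_proj S i Z u * S $ u $ j)"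

text \<open>E[Y | do(A = a)]: replace the structural equation of A by A := a (noise means are 0).\<close>
definition do_mean :: "('v::finite \<Rightarrow> 'v \<Rightarrow> real) \<Rightarrow> 'v \<Rightarrow> 'v \<Rightarrow> real \<Rightarrow> real" where
  "do_mean beta A Y a =
     (matrix_inv (mat 1 - (\<chi> i j. if i = A then 0 else beta i j))
        *v (\<chi> i. if i = A then a else 0)) $ Y"

definition causal_effect :: "('v::finite \<Rightarrow> 'v \<Rightarrow> real) \<Rightarrow> 'v \<Rightarrow> 'v \<Rightarrow> real" where
  "causal_effect beta A Y =
     (THE t. \<forall>a. (do_mean beta A Y has_real_derivative t) (at a))"

definition ols_bias :: "('v::finite \<Rightarrow> 'v \<Rightarrow> real) \<Rightarrow> ('v \<Rightarrow> real) \<Rightarrow> 'v \<Rightarrow> 'v \<Rightarrow> 'v set \<Rightarrow> real" where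
  "ols_bias beta sd A Y K = ols_coef (sem_cov beta sd) A Y K - causal_effect beta A Y"

definition precision_var :: "('v \<times> 'v) set \<Rightarrow> 'v \<Rightarrow> 'v \<Rightarrow> 'v \<Rightarrow> bool" where
  "precision_var E A Y P \<longleftrightarrow>
     (let E' = E - {(A, Y)} in
       P \<noteq> A \<and> P \<noteq> Y \<and>
       (\<forall>K. K \<subseteq> UNIV - {A, Y, P} \<longrightarrow> d_separated E' P A K) \<and>
       (\<exists>L. L \<subseteq> UNIV - {A, Y, P} \<and> d_connected E' P Y L))"

end

theory Submission
  imports Defs
begin

(* Let b be the population regression coefficients of Y on {A, P} \<union> K and h those of P on
   {A} \<union> K. Dropping P from the regression of Y changes the coefficient of A by b_P h_A
   (omitted-variable formula), so it suffices that h_A = 0, i.e. that the partial covariance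
   of P and A given K vanishes. By the precision property P and A are d-separated given K in
   the graph without A \<rightarrow> Y. The outcome Y has no children and is not in K, so on a
   d-connecting path it could only be an interior collider without a descendant in K, which is
   impossible. Hence deleting the edge A \<rightarrow> Y does not affect d-separation of P and A, and the
   Markov property gives the vanishing partial covariance. *)

lemma matrix_mul_transpose_nth:
  fixes N :: "real^'n^'m"
  shows "(N ** transpose N) $ u $ v = N $ u \<bullet> N $ v"
  by (simp add: matrix_matrix_mult_def transpose_def inner_vec_def)

lemma invertible_rows_independent:
  fixes N :: "real^'n^'n"
  assumes "invertible N" and "(\<Sum>u\<in>UNIV. c u *\<^sub>R N $ u) = 0"
  shows "c u = 0"
proof -
  have "(\<Sum>u\<in>UNIV. c u *s row u N) = 0"
    using assms(2) by (simp add: row_def scalar_mult_eq_scaleR vec_lambda_eta)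
  then show ?thesis
    using assms(1) matrix_right_invertible_independent_rows invertible_def by blast
qed

lemma invertible_inj_rows:
  fixes N :: "real^'n^'n"
  assumes "invertible N"
  shows "inj (\<lambda>u. N $ u)"
proof -
  have row_eq: "N $ u = transpose N *v axis u 1" for u
    by (simp add: vec_eq_iff matrix_vector_mult_def transpose_def axis_def
        if_distrib[of "(*) _"] cong: if_cong)
  have "inj ((*v) (transpose N))"
    using inj_matrix_vector_mult transpose_invertible assms by blast
  then show ?thesis
    unfolding inj_def row_eq by (metis axis_eq_axis zero_neq_one)
qed

lemma invertible_matrix_inv:
  fixes M :: "'a::semiring_1^'n^'n"
  assumes "invertible M"
  shows "invertible (matrix_inv M)"
proof -
  have "M ** matrix_inv M = mat 1 \<and> matrix_inv M ** M = mat 1"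
    unfolding matrix_inv_def by (rule someI_ex) (use assms invertible_def in blast)
  then show ?thesis unfolding invertible_def by blast
qed

lemma invertible_id_minus_coef_matrix:
  fixes E :: "('v::finite \<times> 'v) set"
  assumes "acyclic E" and parents: "\<And>i j. (j, i) \<notin> E \<Longrightarrow> beta i j = 0"
  shows "invertible (mat 1 - coef_matrix beta)"
  unfolding invertible_left_inverse matrix_left_invertible_ker
proof (intro allI impI)
  fix x :: "real^'v"
  assume "(mat 1 - coef_matrix beta) *v x = 0"
  then have "x - coef_matrix beta *v x = 0"
    by (simp add: matrix_vector_mult_diff_rdistrib)
  moreover have "(coef_matrix beta *v x) $ i = (\<Sum>j\<in>UNIV. beta i j * x $ j)" for i
    by (simp add: matrix_vector_mult_def coef_matrix_def)
  ultimately have fix_eq: "x $ i = (\<Sum>j\<in>UNIV. beta i j * x $ j)" for i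
    by (metis eq_iff_diff_eq_0 vector_minus_component zero_index)
  have "wf E" using assms(1) by (simp add: finite_acyclic_wf)
  then have "x $ i = 0" for i
  proof (induction i)
    case (less i)
    have "beta i j * x $ j = 0" for j
      using less parents by (cases "(j, i) \<in> E") auto
    then show ?case using fix_eq[of i] by (simp add: sum.neutral)
  qed
  then show "x = 0" by (simp add: vec_eq_iff)
qed

lemma sem_cov_factorization:
  fixes E :: "('v::finite \<times> 'v) set"
  assumes "acyclic E" and "\<And>i j. (j, i) \<notin> E \<Longrightarrow> beta i j = 0"
    and sd_pos: "\<And>i. sd i > 0"
  obtains N :: "real^'v^'v" where "invertible N" and "sem_cov beta sd = N ** transpose N"
proof
  define M where "M = matrix_inv (mat 1 - coef_matrix beta)"
  define D :: "real^'v^'v" where "D = (\<chi> i j. if i = j then sd i else 0)"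
  define D' :: "real^'v^'v" where "D' = (\<chi> i j. if i = j then 1 / sd i else 0)"
  have "D ** D' = mat 1" "D' ** D = mat 1"
    using sd_pos by (auto simp: D_def D'_def matrix_matrix_mult_def mat_def vec_eq_iff
        if_distrib[of "\<lambda>a. a * _"] sum.delta' intro!: less_imp_neq[symmetric] cong: if_cong)
  then have "invertible D" unfolding invertible_def by blast
  moreover have "invertible M"
    unfolding M_def
    by (intro invertible_matrix_inv invertible_id_minus_coef_matrix[OF assms(1,2)])
  ultimately show "invertible (M ** D)" by (simp add: invertible_mult)
  have D_sym: "transpose D = D" by (simp add: D_def transpose_def vec_eq_iff)
  have D_square: "D ** D = (\<chi> i j. if i = j then (sd i)\<^sup>2 else 0)"
    by (simp add: D_def matrix_matrix_mult_def vec_eq_iff power2_eq_square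
        if_distrib[of "\<lambda>a. a * _"] sum.delta' cong: if_cong)
  show "sem_cov beta sd = (M ** D) ** transpose (M ** D)"
    unfolding sem_cov_def Let_def M_def[symmetric] D_square[symmetric]
    by (simp add: matrix_transpose_mul D_sym matrix_mul_assoc)
qed

definition normal_eqs ::
    "real^'v^'v \<Rightarrow> 'v::finite \<Rightarrow> 'v set \<Rightarrow> ('v \<Rightarrow> real) \<Rightarrow> bool" where
  "normal_eqs S y W b \<longleftrightarrow> (\<forall>u. u \<notin> W \<longrightarrow> b u = 0) \<and>
       (\<forall>w\<in>W. S $ w $ y = (\<Sum>u\<in>W. b u * S $ w $ u))"

lemma normal_eqs_exists:
  fixes N :: "real^'v::finite^'v"
  assumes "invertible N"
  shows "\<exists>b. normal_eqs (N ** transpose N) y W b"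
proof -
  define r where "r u = N $ u" for u
  obtain p z where p: "p \<in> span (r ` W)"
    and z_orth: "\<And>v. v \<in> span (r ` W) \<Longrightarrow> orthogonal z v" and y_decomp: "r y = p + z"
    using orthogonal_subspace_decomp_exists[of "r ` W" "r y"] by blast
  obtain a where "p = (\<Sum>v\<in>r ` W. a v *\<^sub>R v)"
    using p span_finite[of "r ` W"] by auto
  also have "\<dots> = (\<Sum>u\<in>W. a (r u) *\<^sub>R r u)"
    using invertible_inj_rows[OF assms] by (simp add: sum.reindex inj_on_def r_def)
  finally have p_eq: "p = (\<Sum>u\<in>W. a (r u) *\<^sub>R r u)" .
  define b where "b u = (if u \<in> W then a (r u) else 0)" for u
  have "r w \<bullet> r y = (\<Sum>u\<in>W. b u * (r w \<bullet> r u))" if w: "w \<in> W" for w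
  proof -
    have "z \<bullet> r w = 0" using z_orth[of "r w"] w by (simp add: span_base orthogonal_def)
    then have "r w \<bullet> r y = r w \<bullet> p" unfolding y_decomp by (simp add: inner_add_right inner_commute)
    also have "\<dots> = (\<Sum>u\<in>W. b u * (r w \<bullet> r u))"
      unfolding p_eq by (simp add: inner_sum_right b_def)
    finally show ?thesis .
  qed
  then have "normal_eqs (N ** transpose N) y W b"
    by (simp add: normal_eqs_def b_def matrix_mul_transpose_nth r_def)
  then show ?thesis by blast
qed

lemma normal_eqs_unique:
  fixes N :: "real^'v::finite^'v"
  assumes N: "invertible N"
    and b1: "normal_eqs (N ** transpose N) y W b1" and b2: "normal_eqs (N ** transpose N) y W b2"
  shows "b1 = b2"
proof -
  define r where "r u = N $ u" for u
  define d where "d u = b1 u - b2 u" for u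
  have d_outside: "d u = 0" if "u \<notin> W" for u
    using b1 b2 that by (simp add: normal_eqs_def d_def)
  have d_orth: "(\<Sum>u\<in>W. d u * (r w \<bullet> r u)) = 0" if "w \<in> W" for w
    using b1 b2 that
    by (simp add: normal_eqs_def matrix_mul_transpose_nth r_def d_def left_diff_distrib
        sum_subtractf)
  define z where "z = (\<Sum>u\<in>W. d u *\<^sub>R r u)"
  have "z \<bullet> z = (\<Sum>w\<in>W. d w * (r w \<bullet> z))"
    unfolding z_def by (simp add: inner_sum_left)
  also have "\<dots> = (\<Sum>w\<in>W. d w * (\<Sum>u\<in>W. d u * (r w \<bullet> r u)))"
    unfolding z_def by (simp add: inner_sum_right)
  also have "\<dots> = 0" using d_orth by simp
  finally have "z = 0" by simp
  moreover have "(\<Sum>u\<in>UNIV. d u *\<^sub>R r u) = z"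
    unfolding z_def by (rule sum.mono_neutral_right) (auto simp: d_outside)
  ultimately have "d u = 0" for u
    using invertible_rows_independent[OF N, of d] by (simp add: r_def)
  then show ?thesis by (simp add: d_def fun_eq_iff)
qed

lemma lin_proj_normal_eqs:
  fixes N :: "real^'v::finite^'v"
  assumes "invertible N"
  shows "normal_eqs (N ** transpose N) y W (lin_proj (N ** transpose N) y W)"
proof -
  have "\<exists>!b. normal_eqs (N ** transpose N) y W b"
    using normal_eqs_exists[OF assms] normal_eqs_unique[OF assms] by blast
  then show ?thesis
    unfolding lin_proj_def normal_eqs_def[symmetric] by (rule theI')
qed

lemma lin_proj_eqI:
  fixes N :: "real^'v::finite^'v"
  assumes "invertible N" and "normal_eqs (N ** transpose N) y W b"
  shows "lin_proj (N ** transpose N) y W = b"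
  using normal_eqs_unique[OF assms(1) lin_proj_normal_eqs[OF assms(1)] assms(2)] .

lemma lin_proj_insert_pcov_eq_0:
  fixes N :: "real^'v::finite^'v"
  defines "S \<equiv> N ** transpose N"
  assumes N: "invertible N" and "a \<notin> K" and "pcov S x a K = 0"
  shows "lin_proj S x (insert a K) = lin_proj S x K"
proof (rule lin_proj_eqI[OF N, folded S_def])
  let ?h = "lin_proj S x K"
  have h: "normal_eqs S x K ?h"
    unfolding S_def by (rule lin_proj_normal_eqs[OF N])
  have "S $ a $ x = (\<Sum>u\<in>K. ?h u * S $ a $ u)"
    using \<open>pcov S x a K = 0\<close>
    by (simp add: pcov_def S_def matrix_mul_transpose_nth inner_commute)
  with h \<open>a \<notin> K\<close> show "normal_eqs S x (insert a K) ?h"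
    by (auto simp: normal_eqs_def)
qed

lemma lin_proj_omitted_variable:
  fixes N :: "real^'v::finite^'v"
  defines "S \<equiv> N ** transpose N"
  assumes N: "invertible N" and "p \<notin> W" and "u \<in> W"
  shows "lin_proj S y W u =
    lin_proj S y (insert p W) u + lin_proj S y (insert p W) p * lin_proj S p W u"
proof -
  define b where "b = lin_proj S y (insert p W)"
  define h where "h = lin_proj S p W"
  have b: "normal_eqs S y (insert p W) b" and h: "normal_eqs S p W h"
    unfolding b_def h_def S_def by (rule lin_proj_normal_eqs[OF N])+
  define b' where "b' v = (if v \<in> W then b v + b p * h v else 0)" for v
  have "normal_eqs S y W b'"
    unfolding normal_eqs_def
  proof (intro conjI allI impI ballI)
    fix v assume "v \<notin> W" then show "b' v = 0" by (simp add: b'_def)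
  next
    fix w assume w: "w \<in> W"
    have "(\<Sum>v\<in>W. b' v * S $ w $ v) =
        (\<Sum>v\<in>W. b v * S $ w $ v) + b p * (\<Sum>v\<in>W. h v * S $ w $ v)"
      by (simp add: b'_def algebra_simps sum.distrib sum_distrib_left)
    also have "\<dots> = (\<Sum>v\<in>insert p W. b v * S $ w $ v)"
      using h w \<open>p \<notin> W\<close> by (simp add: normal_eqs_def)
    also have "\<dots> = S $ w $ y" using b w by (simp add: normal_eqs_def)
    finally show "S $ w $ y = (\<Sum>v\<in>W. b' v * S $ w $ v)" by simp
  qed
  then have "lin_proj S y W = b'"
    unfolding S_def by (rule lin_proj_eqI[OF N])
  then show ?thesis using \<open>u \<in> W\<close> by (simp add: b'_def b_def h_def)
qed

lemma outcome_childless: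
  assumes "acyclic E" and "(a, y) \<in> E" and "\<And>v. (a, v) \<in> E\<^sup>+ \<Longrightarrow> v = y"
  shows "(y, c) \<notin> E"
proof
  assume "(y, c) \<in> E"
  with assms(2) have "(a, c) \<in> E\<^sup>+" by auto
  then have "c = y" by (rule assms(3))
  with \<open>(y, c) \<in> E\<close> \<open>acyclic E\<close> show False by (auto simp: acyclic_def)
qed

lemma rtrancl_delete_edge_into_childless:
  assumes childless: "\<And>c. (y, c) \<notin> E" and "(x, d) \<in> E\<^sup>*" and "d \<noteq> y"
  shows "(x, d) \<in> (E - {(a, y)})\<^sup>*"
  using assms(2,3)
proof (induction rule: converse_rtrancl_induct)
  case base
  then show ?case by simp
next
  case (step x z)
  have "z \<noteq> y"
    using step.hyps(2) step.prems childless by (auto elim: converse_rtranclE)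
  with step show ?case by (auto intro: converse_rtrancl_into_rtrancl)
qed

lemma d_connecting_path_avoids_childless:
  assumes childless: "\<And>c. (y, c) \<notin> E" and "y \<notin> Z" and "x \<noteq> y" and "z \<noteq> y"
    and path: "d_connecting_path E p x z Z" and "i < length p"
  shows "p ! i \<noteq> y"
proof
  assume p_i: "p ! i = y"
  have "p \<noteq> []" "hd p = x" "last p = z"
    and adjacent: "\<And>j. Suc j < length p \<Longrightarrow> adj E (p ! j) (p ! Suc j)"
    and blocked: "\<And>j. 0 < j \<Longrightarrow> Suc j < length p \<Longrightarrow>
        (if collider E (p ! (j - 1)) (p ! j) (p ! Suc j)
         then \<exists>d. (p ! j, d) \<in> E\<^sup>* \<and> d \<in> Z else p ! j \<notin> Z)"
    using path unfolding d_connecting_path_def by blast+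
  then have "i \<noteq> 0" "i \<noteq> length p - 1"
    using p_i \<open>x \<noteq> y\<close> \<open>z \<noteq> y\<close> by (metis hd_conv_nth, metis last_conv_nth)
  then have interior: "0 < i" "Suc i < length p" using \<open>i < length p\<close> by auto
  have "(p ! (i - 1), y) \<in> E" "(p ! Suc i, y) \<in> E"
    using adjacent[of "i - 1"] adjacent[of i] interior p_i childless by (auto simp: adj_def)
  then have "collider E (p ! (i - 1)) (p ! i) (p ! Suc i)"
    using p_i by (simp add: collider_def)
  then obtain d where "(y, d) \<in> E\<^sup>*" "d \<in> Z"
    using blocked[OF interior] p_i by auto
  then show False
    using childless \<open>y \<notin> Z\<close> by (auto elim: converse_rtranclE)
qed

lemma d_separated_delete_edge_into_childless:
  assumes childless: "\<And>c. (y, c) \<notin> E" and "y \<notin> Z" and "x \<noteq> y" and "z \<noteq> y"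
    and sep: "d_separated (E - {(a, y)}) x z Z"
  shows "d_separated E x z Z"
  unfolding d_separated_def d_connected_def
proof
  let ?E' = "E - {(a, y)}"
  assume "\<exists>p. d_connecting_path E p x z Z"
  then obtain p where path: "d_connecting_path E p x z Z" ..
  have avoids: "p ! i \<noteq> y" if "i < length p" for i
    using d_connecting_path_avoids_childless[OF childless assms(2-4) path that] .
  have same_collider: "collider ?E' (p ! (i - 1)) (p ! i) (p ! Suc i) \<longleftrightarrow>
      collider E (p ! (i - 1)) (p ! i) (p ! Suc i)" if "i < length p" for i
    using avoids[OF that] by (auto simp: collider_def)
  have "d_connecting_path ?E' p x z Z"
    unfolding d_connecting_path_def
  proof (intro conjI allI impI)
    show "p \<noteq> []" "hd p = x" "last p = z" "distinct p"
      using path by (simp_all add: d_connecting_path_def)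
  next
    fix i assume "Suc i < length p"
    then show "adj ?E' (p ! i) (p ! Suc i)"
      using path avoids[of i] avoids[of "Suc i"] by (auto simp: d_connecting_path_def adj_def)
  next
    fix i assume i: "0 < i \<and> Suc i < length p"
    have "(\<exists>d. (p ! i, d) \<in> ?E'\<^sup>* \<and> d \<in> Z) \<longleftrightarrow>
        (\<exists>d. (p ! i, d) \<in> E\<^sup>* \<and> d \<in> Z)"
      using rtrancl_delete_edge_into_childless[OF childless] rtrancl_mono[of ?E' E]
        \<open>y \<notin> Z\<close> by blast
    then show "if collider ?E' (p ! (i - 1)) (p ! i) (p ! Suc i)
        then \<exists>d. (p ! i, d) \<in> ?E'\<^sup>* \<and> d \<in> Z else p ! i \<notin> Z"
      using path i same_collider[of i] by (simp add: d_connecting_path_def)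
  qed
  with sep show False unfolding d_separated_def d_connected_def by blast
qed

theorem lemmaB7:
  fixes E :: "('v::finite \<times> 'v) set"
    and beta :: "'v \<Rightarrow> 'v \<Rightarrow> real"
    and sd :: "'v \<Rightarrow> real"
    and A Y P :: 'v
    and K :: "'v set"
  assumes dag: "acyclic E"
    and edge_AY: "(A, Y) \<in> E"
    and parents: "\<And>i j. (j, i) \<notin> E \<Longrightarrow> beta i j = 0"
    and noise_pos: "\<And>i. sd i > 0"
    and faithful: "\<And>i j Z. i \<noteq> j \<Longrightarrow> i \<notin> Z \<Longrightarrow> j \<notin> Z \<Longrightarrow>
                     (pcov (sem_cov beta sd) i j Z = 0 \<longleftrightarrow> d_separated E i j Z)"
    and no_desc: "\<And>v. (A, v) \<in> E\<^sup>+ \<Longrightarrow> v = Y"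
    and K_sub: "K \<subseteq> UNIV - {A, Y}"
    and prec: "precision_var E A Y P"
  shows "ols_bias beta sd A Y K = ols_bias beta sd A Y (insert P K)"
proof (cases "P \<in> K")
  case True
  then show ?thesis by (simp add: insert_absorb)
next
  case False
  obtain N :: "real^'v^'v" where N: "invertible N" and S: "sem_cov beta sd = N ** transpose N"
    using sem_cov_factorization[of E beta sd] dag parents noise_pos by blast
  have "P \<noteq> A" "P \<noteq> Y" and sep: "d_separated (E - {(A, Y)}) P A K"
    using prec K_sub False unfolding precision_var_def Let_def by auto
  have "A \<noteq> Y" using dag edge_AY by (auto simp: acyclic_def)
  have "A \<notin> K" "Y \<notin> K" using K_sub by auto
  have "d_separated E P A K"
    using d_separated_delete_edge_into_childless[OF outcome_childless[OF dag edge_AY no_desc]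
        \<open>Y \<notin> K\<close> \<open>P \<noteq> Y\<close> \<open>A \<noteq> Y\<close> sep] .
  then have "pcov (N ** transpose N) P A K = 0"
    using faithful[OF \<open>P \<noteq> A\<close> False \<open>A \<notin> K\<close>] S by simp
  then have "lin_proj (N ** transpose N) P (insert A K) A = 0"
    using lin_proj_insert_pcov_eq_0[OF N \<open>A \<notin> K\<close>] lin_proj_normal_eqs[OF N, of P K]
      \<open>A \<notin> K\<close> by (simp add: normal_eqs_def)
  moreover have "P \<notin> insert A K" using \<open>P \<noteq> A\<close> False by simp
  ultimately show ?thesis
    using lin_proj_omitted_variable[OF N, of P "insert A K" A Y]
    by (simp add: ols_bias_def ols_coef_def S insert_commute)
qed

end
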